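(* Let $\mathcal V=\mathbb R^{d_v}$, $d(v,\hat v)=\|v-\hat v\|_2^2$, $\ell(v)=\max_{k\in[K]}(a_k^\top v+b_k)$ with $a_k\in\mathbb R^{d_v}$, $b_k\in\mathbb R$, $\hat\mu=\frac1n\sum_{i=1}^n\delta_{\hat v_i}$, $r\ge0$, $\theta_1,\theta_2>0$, and $\ell_\lambda(\hat v)=\sup_{v\in\mathcal V}\{\ell(v)-\lambda d(v,\hat v)\}$. Then the optimal value of $$\min_{\lambda\in\mathbb R_+}\ \lambda r+\lambda\theta_2\log\Big(\frac1n\sum_{i=1}^n\exp\Big(\frac{\ell_{\lambda\theta_1}(\hat v_i)}{\lambda\theta_2}\Big)\Big)$$ equals the optimal value of $$\begin{array}{lll}\min & \lambda r+t\\ \text{s.t.} & \lambda\in\mathbb R_+,\ t\in\mathbb R,\ \eta\in\mathbb R^n_+,\ p\in\mathbb R^n\\ & (\eta_i,\lambda\theta_2,p_i-t)\in\mathcal K_{\exp} & \forall i\in[n]\\ & a_k^\top\hat v_i+b_k+\frac{\|a_k\|_2^2}{4\lambda\theta_1}\le p_i & \forall k\in[K],\ i\in[n]\\ & \frac1n\sum_{i=1}^n\eta_i\le\lambda\theta_2.\end{array}$$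
   Context: $[n]=\{1,\dots,n\}$. The exponential cone is $\mathcal K_{\exp}=\{(x_1,x_2,x_3)\in\mathbb R^3:x_1\ge x_2\exp(x_3/x_2),\ x_2>0\}\cup\{(x_1,0,x_3):x_1\ge0,\ x_3\le0\}$. *)

theory Defs
  imports "HOL-Analysis.Analysis"
begin

definition Kexp :: "(real \<times> real \<times> real) set" where
  "Kexp = {(x1, x2, x3). x2 > 0 \<and> x1 \<ge> x2 * exp (x3 / x2)}
        \<union> {(x1, x2, x3). x2 = 0 \<and> x1 \<ge> 0 \<and> x3 \<le> 0}"

definition pl_loss :: "nat \<Rightarrow> (nat \<Rightarrow> real^'d) \<Rightarrow> (nat \<Rightarrow> real) \<Rightarrow> real^'d \<Rightarrow> real" where
  "pl_loss K a b v = Max ((\<lambda>k. a k \<bullet> v + b k) ` {1..K})"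

definition moreau_loss :: "nat \<Rightarrow> (nat \<Rightarrow> real^'d) \<Rightarrow> (nat \<Rightarrow> real) \<Rightarrow> real \<Rightarrow> real^'d \<Rightarrow> real" where
  "moreau_loss K a b lam vh = (SUP v. pl_loss K a b v - lam * (norm (v - vh))\<^sup>2)"

end

theory Submission
  imports Defs
begin

text \<open>For \<open>\<lambda> > 0\<close> completing the square gives the closed form
  \<open>\<ell>\<^sub>\<lambda>(v) = max\<^sub>k (a\<^sub>k \<bullet> v + b\<^sub>k + \<parallel>a\<^sub>k\<parallel>\<^sup>2 / (4 \<lambda>))\<close>, so the constraints on \<open>p\<^sub>i\<close>
  say exactly \<open>\<ell>\<^sub>\<lambda>\<^sub>\<theta>\<^sub>1(v\<^sub>i) \<le> p\<^sub>i\<close>. With \<open>c = \<lambda> \<theta>\<^sub>2 > 0\<close>, membership in the exponential cone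
  means \<open>c exp ((p\<^sub>i - t) / c) \<le> \<eta>\<^sub>i\<close>, and together with the averaging constraint this is
  equivalent to \<open>c ln (mean\<^sub>i exp (p\<^sub>i / c)) \<le> t\<close>, with equality attained by
  \<open>\<eta>\<^sub>i = c exp ((p\<^sub>i - t) / c)\<close>. A feasible point with \<open>\<lambda> = 0\<close> forces all \<open>a\<^sub>k = 0\<close>; the
  objective is then \<open>\<lambda> r + max\<^sub>k b\<^sub>k\<close>, whose infimum over \<open>\<lambda> > 0\<close> is \<open>max\<^sub>k b\<^sub>k \<le> t\<close>.\<close>

lemma inner_minus_sq_norm_le:
  fixes a v w :: "'a::real_inner"
  assumes "\<mu> > 0"
  shows "a \<bullet> v - \<mu> * (norm (v - w))\<^sup>2 \<le> a \<bullet> w + (norm a)\<^sup>2 / (4 * \<mu>)"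
proof -
  have "0 \<le> \<mu> * (norm (v - w - (1 / (2 * \<mu>)) *\<^sub>R a))\<^sup>2"
    using assms by simp
  also have "\<dots> = \<mu> * (norm (v - w))\<^sup>2 - a \<bullet> (v - w) + (norm a)\<^sup>2 / (4 * \<mu>)"
    using assms unfolding power2_norm_eq_inner
    by (simp add: inner_diff_left inner_diff_right algebra_simps power2_eq_square inner_commute)
  finally show ?thesis
    by (simp add: inner_diff_right)
qed

lemma inner_minus_sq_norm_maximiser:
  fixes a w :: "'a::real_inner"
  assumes "\<mu> > 0"
  shows "a \<bullet> (w + (1 / (2 * \<mu>)) *\<^sub>R a) - \<mu> * (norm (w + (1 / (2 * \<mu>)) *\<^sub>R a - w))\<^sup>2
           = a \<bullet> w + (norm a)\<^sup>2 / (4 * \<mu>)"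
  using assms unfolding power2_norm_eq_inner
  by (simp add: inner_add_right algebra_simps power2_eq_square)

lemma pl_loss_ge:
  assumes "k \<in> {1..K}"
  shows "a k \<bullet> v + b k \<le> pl_loss K a b v"
  unfolding pl_loss_def using assms by (intro Max_ge) auto

lemma pl_loss_attained:
  assumes "K \<ge> 1"
  obtains k where "k \<in> {1..K}" and "pl_loss K a b v = a k \<bullet> v + b k"
proof -
  have "pl_loss K a b v \<in> (\<lambda>k. a k \<bullet> v + b k) ` {1..K}"
    unfolding pl_loss_def using assms by (intro Max_in) auto
  then show ?thesis
    using that by auto
qed

lemma pl_loss_minus_sq_norm_le:
  assumes "\<mu> > 0" and "K \<ge> 1"
    and "\<And>k. k \<in> {1..K} \<Longrightarrow> a k \<bullet> w + b k + (norm (a k))\<^sup>2 / (4 * \<mu>) \<le> p"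
  shows "pl_loss K a b v - \<mu> * (norm (v - w))\<^sup>2 \<le> p"
proof -
  obtain k where k: "k \<in> {1..K}" "pl_loss K a b v = a k \<bullet> v + b k"
    using pl_loss_attained[OF \<open>K \<ge> 1\<close>] .
  show ?thesis
    using k inner_minus_sq_norm_le[OF \<open>\<mu> > 0\<close>, of "a k" v w] assms(3)[OF k(1)] by linarith
qed

lemma moreau_loss_le:
  assumes "\<mu> > 0" and "K \<ge> 1"
    and "\<And>k. k \<in> {1..K} \<Longrightarrow> a k \<bullet> w + b k + (norm (a k))\<^sup>2 / (4 * \<mu>) \<le> p"
  shows "moreau_loss K a b \<mu> w \<le> p"
  unfolding moreau_loss_def
  by (rule cSUP_least) (use pl_loss_minus_sq_norm_le[OF assms] in auto)

lemma moreau_loss_ge: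
  assumes "\<mu> > 0" and "k \<in> {1..K}"
  shows "a k \<bullet> w + b k + (norm (a k))\<^sup>2 / (4 * \<mu>) \<le> moreau_loss K a b \<mu> w"
proof -
  let ?g = "\<lambda>j. a j \<bullet> w + b j + (norm (a j))\<^sup>2 / (4 * \<mu>)"
  let ?v = "w + (1 / (2 * \<mu>)) *\<^sub>R a k"
  have "pl_loss K a b v - \<mu> * (norm (v - w))\<^sup>2 \<le> Max (?g ` {1..K})" for v
    using assms by (intro pl_loss_minus_sq_norm_le) auto
  then have "bdd_above (range (\<lambda>v. pl_loss K a b v - \<mu> * (norm (v - w))\<^sup>2))"
    by (rule bdd_aboveI2)
  then have "pl_loss K a b ?v - \<mu> * (norm (?v - w))\<^sup>2 \<le> moreau_loss K a b \<mu> w"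
    unfolding moreau_loss_def by (rule cSUP_upper[OF UNIV_I])
  then show ?thesis
    using pl_loss_ge[OF assms(2), of a ?v b] inner_minus_sq_norm_maximiser[OF assms(1), of "a k" w]
    by linarith
qed

lemma moreau_loss_constant:
  assumes "\<mu> > 0" and "K \<ge> 1" and "\<And>k. k \<in> {1..K} \<Longrightarrow> a k = 0"
  shows "moreau_loss K a b \<mu> w = Max (b ` {1..K})"
proof (rule antisym)
  show "moreau_loss K a b \<mu> w \<le> Max (b ` {1..K})"
    using assms by (intro moreau_loss_le) auto
  obtain k where "k \<in> {1..K}" "b k = Max (b ` {1..K})"
    using Max_in[of "b ` {1..K}"] \<open>K \<ge> 1\<close> by fastforce
  then show "Max (b ` {1..K}) \<le> moreau_loss K a b \<mu> w"
    using moreau_loss_ge[OF \<open>\<mu> > 0\<close>, of k K a w b] assms(3) by simp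
qed

definition log_mean_exp :: "real \<Rightarrow> nat \<Rightarrow> (nat \<Rightarrow> real) \<Rightarrow> real" where
  "log_mean_exp c n x = c * ln ((1 / real n) * (\<Sum>i=1..n. exp (x i / c)))"

lemma mean_exp_pos:
  assumes "n \<ge> 1"
  shows "0 < (1 / real n) * (\<Sum>i=1..n. exp (x i / c))"
  using assms by (intro mult_pos_pos sum_pos) auto

lemma log_mean_exp_mono:
  assumes "c > 0" and "n \<ge> 1" and "\<And>i. i \<in> {1..n} \<Longrightarrow> x i \<le> y i"
  shows "log_mean_exp c n x \<le> log_mean_exp c n y"
proof -
  have "(\<Sum>i=1..n. exp (x i / c)) \<le> (\<Sum>i=1..n. exp (y i / c))"
    using assms by (intro sum_mono) (simp add: divide_right_mono)
  then show ?thesis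
    unfolding log_mean_exp_def using assms mean_exp_pos[of n]
    by (intro mult_left_mono ln_mono) (auto simp: divide_right_mono)
qed

lemma log_mean_exp_const:
  assumes "c > 0" and "n \<ge> 1"
  shows "log_mean_exp c n (\<lambda>_. B) = B"
  using assms by (simp add: log_mean_exp_def)

lemma log_mean_exp_le_of_Kexp:
  assumes "c > 0" and "n \<ge> 1"
    and cone: "\<And>i. i \<in> {1..n} \<Longrightarrow> (\<eta> i, c, p i - t) \<in> Kexp"
    and mean: "(1 / real n) * (\<Sum>i=1..n. \<eta> i) \<le> c"
  shows "log_mean_exp c n p \<le> t"
proof -
  have eta: "c * exp ((p i - t) / c) \<le> \<eta> i" if "i \<in> {1..n}" for i
    using cone[OF that] \<open>c > 0\<close> unfolding Kexp_def by auto
  have "(\<Sum>i=1..n. exp (p i / c)) = (\<Sum>i=1..n. exp (t / c) * exp ((p i - t) / c))"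
    by (intro sum.cong) (auto simp: exp_add[symmetric] diff_divide_distrib)
  also have "\<dots> \<le> (\<Sum>i=1..n. exp (t / c) * (\<eta> i / c))"
    using eta \<open>c > 0\<close> by (intro sum_mono mult_left_mono) (auto simp: field_simps)
  also have "\<dots> = exp (t / c) / c * (\<Sum>i=1..n. \<eta> i)"
    by (simp add: sum_distrib_left)
  also have "\<dots> \<le> exp (t / c) / c * (real n * c)"
    using mean assms by (intro mult_left_mono) (auto simp: field_simps)
  finally have "(1 / real n) * (\<Sum>i=1..n. exp (p i / c)) \<le> exp (t / c)"
    using assms by (simp add: field_simps)
  then have "ln ((1 / real n) * (\<Sum>i=1..n. exp (p i / c))) \<le> t / c"
    using ln_le_cancel_iff[OF mean_exp_pos[OF \<open>n \<ge> 1\<close>], of "exp (t / c)"] by simp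
  then show ?thesis
    unfolding log_mean_exp_def using \<open>c > 0\<close> by (simp add: field_simps)
qed

lemma mean_exp_shifted_by_log_mean_exp:
  assumes "c > 0" and "n \<ge> 1"
  shows "(1 / real n) * (\<Sum>i=1..n. c * exp ((x i - log_mean_exp c n x) / c)) = c"
proof -
  define m where "m = (1 / real n) * (\<Sum>i=1..n. exp (x i / c))"
  have "m > 0"
    unfolding m_def using mean_exp_pos[OF \<open>n \<ge> 1\<close>] .
  have "exp (log_mean_exp c n x / c) = m"
    using \<open>c > 0\<close> \<open>m > 0\<close> by (simp add: log_mean_exp_def m_def)
  then have "(\<Sum>i=1..n. c * exp ((x i - log_mean_exp c n x) / c)) = c / m * (\<Sum>i=1..n. exp (x i / c))"
    by (simp add: sum_distrib_left diff_divide_distrib exp_diff)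
  then show ?thesis
    using \<open>m > 0\<close> \<open>c > 0\<close> \<open>n \<ge> 1\<close> by (simp add: m_def field_simps)
qed

text \<open>Extended-real division by zero is multiplication by \<open>\<infinity>\<close>, so at \<open>\<lambda> = 0\<close> the
  constraint of the conic program is satisfiable only for \<open>a\<^sub>k = 0\<close>.\<close>

lemma ereal_add_divide_zero_le:
  assumes "y \<ge> 0"
  shows "ereal x + ereal y / ereal 0 \<le> ereal p \<longleftrightarrow> y = 0 \<and> x \<le> p"
  using assms by (cases "y = 0") auto

lemma INF_pos_linear_le:
  fixes r B :: real
  assumes "r \<ge> 0"
  shows "(INF lam \<in> {lam::real. lam > 0}. ereal (lam * r + B)) \<le> ereal B"
  unfolding INF_le_iff
proof (intro allI impI)
  fix y assume "ereal B < y"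
  then show "\<exists>lam \<in> {lam. lam > 0}. ereal (lam * r + B) < y"
  proof (cases y)
    case (real y')
    define lam where "lam = (y' - B) / (r + 1)"
    have "lam > 0" "lam * r < y' - B"
      using \<open>ereal B < y\<close> real assms by (auto simp: lam_def field_simps)
    then show ?thesis
      using real by auto
  qed (auto intro: exI[of _ 1])
qed

definition dro_objective ::
    "nat \<Rightarrow> nat \<Rightarrow> (nat \<Rightarrow> real^'d) \<Rightarrow> (nat \<Rightarrow> real) \<Rightarrow> (nat \<Rightarrow> real^'d)
     \<Rightarrow> real \<Rightarrow> real \<Rightarrow> real \<Rightarrow> real \<Rightarrow> real" where
  "dro_objective n K a b vh r \<theta>1 \<theta>2 lam =
     lam * r + log_mean_exp (lam * \<theta>2) n (\<lambda>i. moreau_loss K a b (lam * \<theta>1) (vh i))"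

definition exp_cone_values ::
    "nat \<Rightarrow> nat \<Rightarrow> (nat \<Rightarrow> real^'d) \<Rightarrow> (nat \<Rightarrow> real) \<Rightarrow> (nat \<Rightarrow> real^'d)
     \<Rightarrow> real \<Rightarrow> real \<Rightarrow> real \<Rightarrow> ereal set" where
  "exp_cone_values n K a b vh r \<theta>1 \<theta>2 =
     {ereal (lam * r + t) | lam t \<eta> p.
        lam \<ge> 0 \<and> (\<forall>i\<in>{1..n}. \<eta> i \<ge> 0)
      \<and> (\<forall>i\<in>{1..n}. (\<eta> i, lam * \<theta>2, p i - t) \<in> Kexp)
      \<and> (\<forall>k\<in>{1..K}. \<forall>i\<in>{1..n}.
            ereal (a k \<bullet> vh i + b k) + ereal ((norm (a k))\<^sup>2) / ereal (4 * lam * \<theta>1)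
            \<le> ereal (p i))
      \<and> (1 / real n) * (\<Sum>i=1..n. \<eta> i) \<le> lam * \<theta>2}"

lemma dro_objective_le_of_feasible:
  assumes "n \<ge> 1" and "K \<ge> 1" and "\<theta>1 > 0" and "\<theta>2 > 0" and "lam > 0"
    and "\<forall>i\<in>{1..n}. (\<eta> i, lam * \<theta>2, p i - t) \<in> Kexp"
    and "\<forall>k\<in>{1..K}. \<forall>i\<in>{1..n}. a k \<bullet> vh i + b k + (norm (a k))\<^sup>2 / (4 * lam * \<theta>1) \<le> p i"
    and "(1 / real n) * (\<Sum>i=1..n. \<eta> i) \<le> lam * \<theta>2"
  shows "dro_objective n K a b vh r \<theta>1 \<theta>2 lam \<le> lam * r + t"
proof -
  have "moreau_loss K a b (lam * \<theta>1) (vh i) \<le> p i" if "i \<in> {1..n}" for i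
    using assms that by (intro moreau_loss_le) (auto simp: mult.assoc)
  then have "log_mean_exp (lam * \<theta>2) n (\<lambda>i. moreau_loss K a b (lam * \<theta>1) (vh i))
               \<le> log_mean_exp (lam * \<theta>2) n p"
    using assms by (intro log_mean_exp_mono) auto
  also have "\<dots> \<le> t"
    using assms by (intro log_mean_exp_le_of_Kexp) auto
  finally show ?thesis
    by (simp add: dro_objective_def)
qed

lemma INF_dro_objective_le_of_zero_multiplier:
  assumes "n \<ge> 1" and "K \<ge> 1" and "r \<ge> 0" and "\<theta>1 > 0" and "\<theta>2 > 0"
    and cone: "\<forall>i\<in>{1..n}. (\<eta> i, 0, p i - t) \<in> Kexp"
    and epi: "\<forall>k\<in>{1..K}. \<forall>i\<in>{1..n}.
                ereal (a k \<bullet> vh i + b k) + ereal ((norm (a k))\<^sup>2) / ereal 0 \<le> ereal (p i)"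
  shows "(INF lam \<in> {lam::real. lam > 0}. ereal (dro_objective n K a b vh r \<theta>1 \<theta>2 lam)) \<le> ereal t"
proof -
  have "1 \<in> {1..n}"
    using \<open>n \<ge> 1\<close> by simp
  have "(norm (a k))\<^sup>2 = 0 \<and> a k \<bullet> vh 1 + b k \<le> p 1" if "k \<in> {1..K}" for k
    using epi that \<open>1 \<in> {1..n}\<close>
    by (intro ereal_add_divide_zero_le[THEN iffD1, OF zero_le_power2]) blast
  then have a_zero: "a k = 0" and b_le: "b k \<le> p 1" if "k \<in> {1..K}" for k
    using that by (metis inner_zero_left add_0 power_eq_0_iff norm_eq_zero)+
  have "p 1 \<le> t"
    using cone \<open>1 \<in> {1..n}\<close> by (auto simp: Kexp_def)
  define B where "B = Max (b ` {1..K})"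
  have "B \<le> t"
    using b_le \<open>p 1 \<le> t\<close> \<open>K \<ge> 1\<close> unfolding B_def by (subst Max_le_iff) force+
  have "dro_objective n K a b vh r \<theta>1 \<theta>2 lam = lam * r + B" if "lam > 0" for lam
  proof -
    have "moreau_loss K a b (lam * \<theta>1) (vh i) = B" for i
      unfolding B_def using assms that a_zero by (intro moreau_loss_constant) auto
    then show ?thesis
      using assms that by (simp add: dro_objective_def log_mean_exp_const)
  qed
  then have "(INF lam \<in> {lam::real. lam > 0}. ereal (dro_objective n K a b vh r \<theta>1 \<theta>2 lam))
               = (INF lam \<in> {lam::real. lam > 0}. ereal (lam * r + B))"
    by (intro INF_cong) auto
  also have "\<dots> \<le> ereal B"
    using INF_pos_linear_le[OF \<open>r \<ge> 0\<close>] .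
  also have "\<dots> \<le> ereal t"
    using \<open>B \<le> t\<close> by simp
  finally show ?thesis .
qed

lemma INF_dro_objective_le_exp_cone_value:
  assumes "n \<ge> 1" and "K \<ge> 1" and "r \<ge> 0" and "\<theta>1 > 0" and "\<theta>2 > 0"
    and "x \<in> exp_cone_values n K a b vh r \<theta>1 \<theta>2"
  shows "(INF lam \<in> {lam::real. lam > 0}. ereal (dro_objective n K a b vh r \<theta>1 \<theta>2 lam)) \<le> x"
proof -
  obtain lam t \<eta> p where x: "x = ereal (lam * r + t)" and "lam \<ge> 0"
    and cone: "\<forall>i\<in>{1..n}. (\<eta> i, lam * \<theta>2, p i - t) \<in> Kexp"
    and epi: "\<forall>k\<in>{1..K}. \<forall>i\<in>{1..n}.
                ereal (a k \<bullet> vh i + b k) + ereal ((norm (a k))\<^sup>2) / ereal (4 * lam * \<theta>1) \<le> ereal (p i)"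
    and mean: "(1 / real n) * (\<Sum>i=1..n. \<eta> i) \<le> lam * \<theta>2"
    using assms(6) unfolding exp_cone_values_def by blast
  show ?thesis
  proof (cases "lam = 0")
    case True
    then show ?thesis
      using INF_dro_objective_le_of_zero_multiplier[of n K r \<theta>1 \<theta>2 \<eta> p t] assms cone epi x by simp
  next
    case False
    with \<open>lam \<ge> 0\<close> have "lam > 0" by simp
    then have "dro_objective n K a b vh r \<theta>1 \<theta>2 lam \<le> lam * r + t"
      using assms cone epi mean by (intro dro_objective_le_of_feasible) auto
    then show ?thesis
      using \<open>lam > 0\<close> x by (intro INF_lower2[of lam]) auto
  qed
qed

lemma Inf_exp_cone_values_le_dro_objective:
  assumes "n \<ge> 1" and "\<theta>1 > 0" and "\<theta>2 > 0" and "lam > 0"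
  shows "Inf (exp_cone_values n K a b vh r \<theta>1 \<theta>2) \<le> ereal (dro_objective n K a b vh r \<theta>1 \<theta>2 lam)"
proof -
  define c where "c = lam * \<theta>2"
  define p where "p i = moreau_loss K a b (lam * \<theta>1) (vh i)" for i
  define t where "t = log_mean_exp c n p"
  define \<eta> where "\<eta> i = c * exp ((p i - t) / c)" for i
  have "c > 0"
    using assms by (simp add: c_def)
  have "ereal (lam * r + t) \<in> exp_cone_values n K a b vh r \<theta>1 \<theta>2"
    unfolding exp_cone_values_def
  proof (intro CollectI exI conjI ballI)
    show "ereal (lam * r + t) = ereal (lam * r + t)" ..
    show "(1 / real n) * (\<Sum>i=1..n. \<eta> i) \<le> lam * \<theta>2"
      using mean_exp_shifted_by_log_mean_exp[OF \<open>c > 0\<close> \<open>n \<ge> 1\<close>, of p]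
      by (simp add: \<eta>_def t_def c_def)
    fix k i assume "k \<in> {1..K}"
    then show "ereal (a k \<bullet> vh i + b k) + ereal ((norm (a k))\<^sup>2) / ereal (4 * lam * \<theta>1) \<le> ereal (p i)"
      using moreau_loss_ge[of "lam * \<theta>1" k K a "vh i" b] assms by (simp add: p_def mult.assoc)
  qed (use \<open>c > 0\<close> \<open>lam > 0\<close> in \<open>auto simp: \<eta>_def Kexp_def c_def\<close>)
  moreover have "dro_objective n K a b vh r \<theta>1 \<theta>2 lam = lam * r + t"
    by (simp add: dro_objective_def t_def p_def[abs_def] c_def)
  ultimately show ?thesis
    by (simp add: Inf_lower)
qed

theorem mainTheorem10:
  fixes vh :: "nat \<Rightarrow> real^'d" and a :: "nat \<Rightarrow> real^'d" and b :: "nat \<Rightarrow> real"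
    and n K :: nat and r \<theta>1 \<theta>2 :: real
  assumes "n \<ge> 1" and "K \<ge> 1" and "r \<ge> 0" and "\<theta>1 > 0" and "\<theta>2 > 0"
  shows "(INF lam \<in> {lam::real. lam > 0}.
            ereal (lam * r + lam * \<theta>2 *
              ln ((1 / real n) * (\<Sum>i=1..n. exp (moreau_loss K a b (lam * \<theta>1) (vh i) / (lam * \<theta>2))))))
       = Inf {ereal (lam * r + t) | lam t \<eta> p.
                lam \<ge> 0 \<and> (\<forall>i\<in>{1..n}. \<eta> i \<ge> 0)
              \<and> (\<forall>i\<in>{1..n}. (\<eta> i, lam * \<theta>2, p i - t) \<in> Kexp)
              \<and> (\<forall>k\<in>{1..K}. \<forall>i\<in>{1..n}.
                    ereal (a k \<bullet> vh i + b k) + ereal ((norm (a k))\<^sup>2) / ereal (4 * lam * \<theta>1)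
                    \<le> ereal (p i))
              \<and> (1 / real n) * (\<Sum>i=1..n. \<eta> i) \<le> lam * \<theta>2}"
proof -
  have "(INF lam \<in> {lam::real. lam > 0}. ereal (dro_objective n K a b vh r \<theta>1 \<theta>2 lam))
          = Inf (exp_cone_values n K a b vh r \<theta>1 \<theta>2)"
  proof (rule antisym)
    show "(INF lam \<in> {lam::real. lam > 0}. ereal (dro_objective n K a b vh r \<theta>1 \<theta>2 lam))
            \<le> Inf (exp_cone_values n K a b vh r \<theta>1 \<theta>2)"
      using INF_dro_objective_le_exp_cone_value[OF assms] by (rule Inf_greatest)
    show "Inf (exp_cone_values n K a b vh r \<theta>1 \<theta>2)
            \<le> (INF lam \<in> {lam::real. lam > 0}. ereal (dro_objective n K a b vh r \<theta>1 \<theta>2 lam))"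
      using Inf_exp_cone_values_le_dro_objective assms by (intro INF_greatest) simp
  qed
  then show ?thesis
    by (simp add: dro_objective_def log_mean_exp_def exp_cone_values_def)
qed

end
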